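(* Let $n\in\mathbb N$, $W=\{w_1,\dots,w_n\}$, $M=\{m_1,\dots,m_n\}$ disjoint, $\mu_{\mathrm{id}}$ the perfect marriage marrying $w_i$ to $m_i$ for all $i$, and $D=\{(i,j)\in\{1,\dots,n\}^2: i\ne j\}$. There exist functions $\succ_W:\{0,1\}^D\to\mathcal P(W,M)$ and $\succ_M:\{0,1\}^D\to\mathcal P(M,W)$ such that for all $\bar x,\bar y\in\{0,1\}^D$: (a) if $\mathrm{DISJ}(\bar x,\bar y)=1$ then $\mu_{\mathrm{id}}$ is the unique stable marriage with respect to $\succ_W(\bar x)$ and $\succ_M(\bar y)$; (b) if $\mathrm{DISJ}(\bar x,\bar y)=0$ then $\mu_{\mathrm{id}}$ is unstable with respect to $\succ_W(\bar x)$ and $\succ_M(\bar y)$.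
   Context: $\mathcal P(W,M)$ is the set of profiles assigning to each woman a preference list, i.e. a totally ordered subset of $M$ (men not on the list are unacceptable); $\mathcal P(M,W)$ analogously. A woman prefers $m$ over $m'$ if $m$ precedes $m'$ on her list, or $m$ is on her list and $m'$ is not (being single counts as having no spouse on the list); analogously for men. A marriage is a one-to-one map between a subset of $W$ and a subset of $M$ (others single). A marriage is stable if every married participant is married to someone on their list and there is no blocking pair $(w,m)$: $w$ prefers $m$ to her current situation and $m$ prefers $w$ to his. $\mathrm{DISJ}(\bar x,\bar y)=1$ if there is no index $(i,j)$ with $x^i_j=y^i_j=1$, and $0$ otherwise. *)

theory Defs
  imports Main
begin

(* Women w_1..w_n and men m_1..m_n are represented by their indices 0..n-1,
   in two separate roles (so W and M are disjoint by construction). *)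

(* a preference list: a totally ordered subset, i.e. a distinct list *)
definition precedes :: "'a list \<Rightarrow> 'a \<Rightarrow> 'a \<Rightarrow> bool" where
  "precedes L a b \<longleftrightarrow> (\<exists>xs ys. L = xs @ a # ys \<and> b \<in> set ys)"

(* a participant with list L prefers a over the situation c (None = single) *)
definition prefers :: "'a list \<Rightarrow> 'a \<Rightarrow> 'a option \<Rightarrow> bool" where
  "prefers L a c \<longleftrightarrow>
     (case c of None \<Rightarrow> a \<in> set L
      | Some b \<Rightarrow> precedes L a b \<or> (a \<in> set L \<and> b \<notin> set L))"

(* a profile in P(W,M) (resp. P(M,W)): each of the n agents gets a distinct
   list of agents of the other side *)
definition valid_profile :: "nat \<Rightarrow> (nat \<Rightarrow> nat list) \<Rightarrow> bool" where
  "valid_profile n P \<longleftrightarrow> (\<forall>i<n. distinct (P i) \<and> set (P i) \<subseteq> {0..<n})"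

definition is_marriage :: "nat \<Rightarrow> (nat \<times> nat) set \<Rightarrow> bool" where
  "is_marriage n \<mu> \<longleftrightarrow> \<mu> \<subseteq> {0..<n} \<times> {0..<n}
     \<and> (\<forall>w m m'. (w,m) \<in> \<mu> \<longrightarrow> (w,m') \<in> \<mu> \<longrightarrow> m = m')
     \<and> (\<forall>w w' m. (w,m) \<in> \<mu> \<longrightarrow> (w',m) \<in> \<mu> \<longrightarrow> w = w')"

definition husband :: "(nat \<times> nat) set \<Rightarrow> nat \<Rightarrow> nat option" where
  "husband \<mu> w = (if \<exists>m. (w,m) \<in> \<mu> then Some (THE m. (w,m) \<in> \<mu>) else None)"

definition wife :: "(nat \<times> nat) set \<Rightarrow> nat \<Rightarrow> nat option" where
  "wife \<mu> m = (if \<exists>w. (w,m) \<in> \<mu> then Some (THE w. (w,m) \<in> \<mu>) else None)"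

definition stable :: "nat \<Rightarrow> (nat \<Rightarrow> nat list) \<Rightarrow> (nat \<Rightarrow> nat list) \<Rightarrow> (nat \<times> nat) set \<Rightarrow> bool" where
  "stable n PW PM \<mu> \<longleftrightarrow> is_marriage n \<mu>
     \<and> (\<forall>(w,m) \<in> \<mu>. m \<in> set (PW w) \<and> w \<in> set (PM m))
     \<and> \<not> (\<exists>w<n. \<exists>m<n. prefers (PW w) m (husband \<mu> w) \<and> prefers (PM m) w (wife \<mu> m))"

definition mu_id :: "nat \<Rightarrow> (nat \<times> nat) set" where
  "mu_id n = {(i,i) | i. i < n}"

definition offdiag :: "nat \<Rightarrow> (nat \<times> nat) set" where
  "offdiag n = {(i,j). i < n \<and> j < n \<and> i \<noteq> j}"

(* {0,1}^D, represented as boolean functions vanishing outside D *)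
definition bitvecs :: "nat \<Rightarrow> (nat \<times> nat \<Rightarrow> bool) set" where
  "bitvecs n = {x. \<forall>p. p \<notin> offdiag n \<longrightarrow> \<not> x p}"

definition DISJ :: "nat \<Rightarrow> (nat \<times> nat \<Rightarrow> bool) \<Rightarrow> (nat \<times> nat \<Rightarrow> bool) \<Rightarrow> bool" where
  "DISJ n x y \<longleftrightarrow> \<not> (\<exists>p \<in> offdiag n. x p \<and> y p)"

end

theory Submission
  imports Defs
begin

text \<open>Woman \<open>i\<close> lists the men \<open>j \<noteq> i\<close> with \<open>x (i,j)\<close> and then, last, her partner \<open>m_i\<close>;
  man \<open>j\<close> lists the women \<open>i \<noteq> j\<close> with \<open>y (i,j)\<close> and then, last, \<open>w_j\<close>. So \<open>(w_i, m_j)\<close>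
  blocks \<open>\<mu>_id\<close> exactly when \<open>x (i,j)\<close> and \<open>y (i,j)\<close>. Moreover an off-diagonal pair is mutually
  acceptable only under the same condition, so for disjoint inputs every stable marriage is
  contained in the diagonal, and a missing diagonal couple would block it.\<close>

definition women_profile :: "nat \<Rightarrow> (nat \<times> nat \<Rightarrow> bool) \<Rightarrow> nat \<Rightarrow> nat list" where
  "women_profile n x i = filter (\<lambda>j. j \<noteq> i \<and> x (i,j)) [0..<n] @ [i]"

definition men_profile :: "nat \<Rightarrow> (nat \<times> nat \<Rightarrow> bool) \<Rightarrow> nat \<Rightarrow> nat list" where
  "men_profile n y j = filter (\<lambda>i. i \<noteq> j \<and> y (i,j)) [0..<n] @ [j]"

lemma precedes_snoc_last_iff:
  assumes "b \<notin> set L"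
  shows "precedes (L @ [b]) a b \<longleftrightarrow> a \<in> set L"
proof
  assume "precedes (L @ [b]) a b"
  then obtain xs ys where "L @ [b] = xs @ a # ys" and "b \<in> set ys"
    unfolding precedes_def by blast
  then have "butlast (L @ [b]) = xs @ a # butlast ys"
    by (auto simp: butlast_append)
  then show "a \<in> set L" by simp
next
  assume "a \<in> set L"
  then obtain xs ys where "L = xs @ a # ys" by (meson split_list)
  then show "precedes (L @ [b]) a b"
    unfolding precedes_def by (intro exI[of _ xs] exI[of _ "ys @ [b]"]) simp
qed

lemma valid_profile_women_profile: "valid_profile n (women_profile n x)"
  unfolding valid_profile_def women_profile_def by auto

lemma valid_profile_men_profile: "valid_profile n (men_profile n y)"
  unfolding valid_profile_def men_profile_def by auto

lemma prefers_women_profile_over_partner: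
  "prefers (women_profile n x i) j (Some i) \<longleftrightarrow> j \<noteq> i \<and> j < n \<and> x (i,j)"
  using precedes_snoc_last_iff[of i "filter (\<lambda>j. j \<noteq> i \<and> x (i,j)) [0..<n]" j]
  unfolding prefers_def women_profile_def by auto

lemma prefers_men_profile_over_partner:
  "prefers (men_profile n y j) i (Some j) \<longleftrightarrow> i \<noteq> j \<and> i < n \<and> y (i,j)"
  using precedes_snoc_last_iff[of j "filter (\<lambda>i. i \<noteq> j \<and> y (i,j)) [0..<n]" i]
  unfolding prefers_def men_profile_def by auto

lemma acceptable_off_diagonal:
  assumes "j \<in> set (women_profile n x i)" "i \<in> set (men_profile n y j)" "i \<noteq> j"
  shows "x (i,j) \<and> y (i,j)"
  using assms unfolding women_profile_def men_profile_def by auto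

lemma husband_mu_id: "i < n \<Longrightarrow> husband (mu_id n) i = Some i"
  unfolding husband_def mu_id_def by auto

lemma wife_mu_id: "i < n \<Longrightarrow> wife (mu_id n) i = Some i"
  unfolding wife_def mu_id_def by auto

lemma is_marriage_mu_id: "is_marriage n (mu_id n)"
  unfolding is_marriage_def mu_id_def by auto

lemma blocks_mu_id_iff:
  assumes "i < n" "j < n"
  shows "prefers (women_profile n x i) j (husband (mu_id n) i)
           \<and> prefers (men_profile n y j) i (wife (mu_id n) j)
         \<longleftrightarrow> i \<noteq> j \<and> x (i,j) \<and> y (i,j)"
  using assms by (auto simp: husband_mu_id wife_mu_id prefers_women_profile_over_partner
                             prefers_men_profile_over_partner)

lemma stable_mu_id_iff_DISJ:
  "stable n (women_profile n x) (men_profile n y) (mu_id n) \<longleftrightarrow> DISJ n x y"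
proof -
  have "\<forall>(w,m) \<in> mu_id n. m \<in> set (women_profile n x w) \<and> w \<in> set (men_profile n y m)"
    unfolding mu_id_def women_profile_def men_profile_def by auto
  moreover have "(\<exists>w<n. \<exists>m<n. prefers (women_profile n x w) m (husband (mu_id n) w)
                             \<and> prefers (men_profile n y m) w (wife (mu_id n) m))
                 \<longleftrightarrow> \<not> DISJ n x y"
    using blocks_mu_id_iff[of _ n _ x y] unfolding DISJ_def offdiag_def by blast
  ultimately show ?thesis
    unfolding stable_def using is_marriage_mu_id by blast
qed

lemma stable_subset_mu_id:
  assumes "stable n (women_profile n x) (men_profile n y) \<mu>" "DISJ n x y"
  shows "\<mu> \<subseteq> mu_id n"
proof (clarify)
  fix i j assume couple: "(i,j) \<in> \<mu>"
  have "is_marriage n \<mu>"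
    and "\<forall>(w,m) \<in> \<mu>. m \<in> set (women_profile n x w) \<and> w \<in> set (men_profile n y m)"
    using assms(1) unfolding stable_def by blast+
  with couple have "i < n" "j < n"
    and "j \<in> set (women_profile n x i)" "i \<in> set (men_profile n y j)"
    unfolding is_marriage_def by auto
  then have "i = j"
    using assms(2) acceptable_off_diagonal[of j n x i y] unfolding DISJ_def offdiag_def by auto
  with \<open>i < n\<close> show "(i,j) \<in> mu_id n" unfolding mu_id_def by simp
qed

lemma stable_sub_mu_id_eq:
  assumes "stable n PW PM \<mu>" "\<mu> \<subseteq> mu_id n"
    and acceptable: "\<And>i. i < n \<Longrightarrow> i \<in> set (PW i) \<and> i \<in> set (PM i)"
  shows "\<mu> = mu_id n"
proof
  show "mu_id n \<subseteq> \<mu>"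
  proof (rule subsetI, rule ccontr)
    fix p assume "p \<in> mu_id n" "p \<notin> \<mu>"
    then obtain i where p: "p = (i,i)" "i < n" unfolding mu_id_def by auto
    with \<open>p \<notin> \<mu>\<close> assms(2) have "husband \<mu> i = None" "wife \<mu> i = None"
      unfolding husband_def wife_def mu_id_def by auto
    with acceptable[OF \<open>i < n\<close>]
    have "prefers (PW i) i (husband \<mu> i)" "prefers (PM i) i (wife \<mu> i)"
      unfolding prefers_def by auto
    with assms(1) \<open>i < n\<close> show False unfolding stable_def by blast
  qed
qed (fact assms(2))

theorem lemma15:
  fixes n :: nat
  shows "\<exists>(FW :: (nat \<times> nat \<Rightarrow> bool) \<Rightarrow> nat \<Rightarrow> nat list)
            (FM :: (nat \<times> nat \<Rightarrow> bool) \<Rightarrow> nat \<Rightarrow> nat list).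
     (\<forall>x \<in> bitvecs n. valid_profile n (FW x)) \<and>
     (\<forall>y \<in> bitvecs n. valid_profile n (FM y)) \<and>
     (\<forall>x \<in> bitvecs n. \<forall>y \<in> bitvecs n.
        (DISJ n x y \<longrightarrow> stable n (FW x) (FM y) (mu_id n) \<and>
            (\<forall>\<mu>. stable n (FW x) (FM y) \<mu> \<longrightarrow> \<mu> = mu_id n)) \<and>
        (\<not> DISJ n x y \<longrightarrow> \<not> stable n (FW x) (FM y) (mu_id n)))"
proof -
  have unique: "\<mu> = mu_id n"
    if disjoint: "DISJ n x y" and stable: "stable n (women_profile n x) (men_profile n y) \<mu>"
    for x y \<mu>
  proof (rule stable_sub_mu_id_eq[OF stable stable_subset_mu_id[OF stable disjoint]])
    show "\<And>i. i < n \<Longrightarrow> i \<in> set (women_profile n x i) \<and> i \<in> set (men_profile n y i)"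
      unfolding women_profile_def men_profile_def by simp
  qed
  show ?thesis
    by (rule exI[of _ "women_profile n"], rule exI[of _ "men_profile n"])
       (simp add: valid_profile_women_profile valid_profile_men_profile stable_mu_id_iff_DISJ unique)
qed

end
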